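(* Let $s=\tfrac12$ and $\lambda\in\mathbb{C}$. The space of even superderivations of $\mathfrak{L}^{1/2}_\lambda$ of degree $0$ equals $$\mathrm{span}_{\mathbb{C}}\{\mathrm{ad}\,L_0,\ \mathrm{ad}\,I_0\}\oplus\mathbb{C}\,\partial_G\oplus\delta_{\lambda,0}\,\mathbb{C}\,\partial_D,$$ where the last summand is $\mathbb{C}\partial_D$ if $\lambda=0$ and $\{0\}$ if $\lambda\neq0$. In particular $\partial_G$ is a superderivation for every $\lambda$, and $\partial_D$ is a superderivation when $\lambda=0$.
   Context: For $s\in\{0,\tfrac12\}$ and $\lambda\in\mathbb{C}$, $\mathfrak{L}^s_\lambda$ is the complex Lie superalgebra with basis $\{L_m,I_m,G_p,H_p : m\in\mathbb{Z},\ p\in s+\mathbb{Z}\}$, even part spanned by the $L_m,I_m$, odd part spanned by the $G_p,H_p$, and brackets $[L_m,L_n]=(m-n)L_{m+n}$, $[L_m,I_n]=(m-n)I_{m+n}$, $[L_m,H_p]=(\tfrac m2-p)H_{m+p}$, $[L_m,G_p]=(\tfrac m2-p)G_{m+p}+\lambda(m+1)H_{m+p}$, $[I_m,G_p]=(m-2p)H_{m+p}$, $[G_p,G_q]=I_{p+q}$, plus those given by super-antisymmetry $[y,x]=-(-1)^{|x||y|}[x,y]$; all other brackets of basis elements are zero. $\mathfrak{L}_r$ is spanned by basis elements of index $r$. A superderivation of parity $a$ is a linear map $D$ shifting parity by $a$ with $D([x,y])=[D(x),y]+(-1)^{a|x|}[x,D(y)]$; it has degree $r$ if $D(\mathfrak{L}_q)\subset\mathfrak{L}_{q+r}$.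 $\mathrm{ad}\,x(y)=[x,y]$. The linear maps $\partial_G,\partial_D$ (called $\partial_4,\partial_3$ in the paper for $s=\tfrac12$) are defined by $\partial_G(L_m)=\partial_G(I_m)=\partial_G(H_p)=0$, $\partial_G(G_p)=H_p$; $\partial_D(L_m)=0$, $\partial_D(I_m)=2I_m$, $\partial_D(G_p)=G_p$, $\partial_D(H_p)=3H_p$. *)

theory Defs
  imports Complex_Main
begin

text \<open>Basis of the Lie superalgebra with s = 1/2.
  Lb m = L_m, Ib m = I_m (m integer); Gb k = G_(k+1/2), Hb k = H_(k+1/2).\<close>
datatype basis = Lb int | Ib int | Gb int | Hb int

definition Vsp :: "(basis \<Rightarrow> complex) set" where
  "Vsp = {x. finite {b. x b \<noteq> 0}}"

definition ev :: "basis \<Rightarrow> basis \<Rightarrow> complex" where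
  "ev b = (\<lambda>c. if c = b then 1 else 0)"

fun evenb :: "basis \<Rightarrow> bool" where
  "evenb (Lb _) = True" | "evenb (Ib _) = True" | "evenb (Gb _) = False" | "evenb (Hb _) = False"

fun idx :: "basis \<Rightarrow> real" where
  "idx (Lb m) = of_int m" | "idx (Ib m) = of_int m"
| "idx (Gb k) = of_int k + 1/2" | "idx (Hb k) = of_int k + 1/2"

definition hp :: "int \<Rightarrow> complex" where "hp k = of_int k + 1/2"

fun brb :: "complex \<Rightarrow> basis \<Rightarrow> basis \<Rightarrow> basis \<Rightarrow> complex" where
  "brb lam (Lb m) (Lb n) = (\<lambda>c. of_int (m - n) * ev (Lb (m + n)) c)"
| "brb lam (Lb m) (Ib n) = (\<lambda>c. of_int (m - n) * ev (Ib (m + n)) c)"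
| "brb lam (Ib n) (Lb m) = (\<lambda>c. - (of_int (m - n) * ev (Ib (m + n)) c))"
| "brb lam (Lb m) (Hb k) = (\<lambda>c. (of_int m / 2 - hp k) * ev (Hb (m + k)) c)"
| "brb lam (Hb k) (Lb m) = (\<lambda>c. - ((of_int m / 2 - hp k) * ev (Hb (m + k)) c))"
| "brb lam (Lb m) (Gb k) = (\<lambda>c. (of_int m / 2 - hp k) * ev (Gb (m + k)) c
                                  + lam * (of_int m + 1) * ev (Hb (m + k)) c)"
| "brb lam (Gb k) (Lb m) = (\<lambda>c. - ((of_int m / 2 - hp k) * ev (Gb (m + k)) c
                                  + lam * (of_int m + 1) * ev (Hb (m + k)) c))"
| "brb lam (Ib m) (Gb k) = (\<lambda>c. (of_int m - 2 * hp k) * ev (Hb (m + k)) c)"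
| "brb lam (Gb k) (Ib m) = (\<lambda>c. - ((of_int m - 2 * hp k) * ev (Hb (m + k)) c))"
| "brb lam (Gb k) (Gb l) = (\<lambda>c. ev (Ib (k + l + 1)) c)"
| "brb lam _ _ = (\<lambda>c. 0)"

definition br :: "complex \<Rightarrow> (basis \<Rightarrow> complex) \<Rightarrow> (basis \<Rightarrow> complex) \<Rightarrow> basis \<Rightarrow> complex" where
  "br lam x y = (\<lambda>c. \<Sum>a\<in>{a. x a \<noteq> 0}. \<Sum>b\<in>{b. y b \<noteq> 0}. x a * y b * brb lam a b c)"

definition ad :: "complex \<Rightarrow> (basis \<Rightarrow> complex) \<Rightarrow> (basis \<Rightarrow> complex) \<Rightarrow> basis \<Rightarrow> complex" where
  "ad lam x = br lam x"

definition partialG :: "(basis \<Rightarrow> complex) \<Rightarrow> basis \<Rightarrow> complex" where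
  "partialG x = (\<lambda>c. case c of Hb k \<Rightarrow> x (Gb k) | _ \<Rightarrow> 0)"

definition partialD :: "(basis \<Rightarrow> complex) \<Rightarrow> basis \<Rightarrow> complex" where
  "partialD x = (\<lambda>c. case c of Lb m \<Rightarrow> 0 | Ib m \<Rightarrow> 2 * x (Ib m)
                                | Gb k \<Rightarrow> x (Gb k) | Hb k \<Rightarrow> 3 * x (Hb k))"

definition even_superder_deg0 :: "complex \<Rightarrow> ((basis \<Rightarrow> complex) \<Rightarrow> basis \<Rightarrow> complex) \<Rightarrow> bool" where
  "even_superder_deg0 lam D \<longleftrightarrow>
     (\<forall>x\<in>Vsp. D x \<in> Vsp)
   \<and> (\<forall>x\<in>Vsp. \<forall>y\<in>Vsp. D (\<lambda>b. x b + y b) = (\<lambda>b. D x b + D y b))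
   \<and> (\<forall>a. \<forall>x\<in>Vsp. D (\<lambda>b. a * x b) = (\<lambda>b. a * D x b))
   \<and> (\<forall>x\<in>Vsp. (\<forall>b. x b \<noteq> 0 \<longrightarrow> evenb b) \<longrightarrow> (\<forall>b. D x b \<noteq> 0 \<longrightarrow> evenb b))
   \<and> (\<forall>x\<in>Vsp. (\<forall>b. x b \<noteq> 0 \<longrightarrow> \<not> evenb b) \<longrightarrow> (\<forall>b. D x b \<noteq> 0 \<longrightarrow> \<not> evenb b))
   \<and> (\<forall>q. \<forall>x\<in>Vsp. (\<forall>b. x b \<noteq> 0 \<longrightarrow> idx b = q) \<longrightarrow> (\<forall>b. D x b \<noteq> 0 \<longrightarrow> idx b = q))
   \<and> (\<forall>x\<in>Vsp. \<forall>y\<in>Vsp. D (br lam x y) = (\<lambda>c. br lam (D x) y c + br lam x (D y) c))"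

end

theory Submission
  imports Defs
begin

text \<open>A degree-0 even superderivation D maps each basis element u into the span of u and
  its twin (L_m and I_m, or G_p and H_p), so D is described by eight coefficient sequences.
  The derivation rule on brackets of basis elements turns into functional equations for them:
  Cauchy-type additivity over the integers makes the L-coefficients linear in the index, the
  brackets with I_m and [G_p, G_q] = I_{p+q} tie all remaining coefficients to four constants,
  and the term \<lambda>(m+1)H_{m+p} of [L_m, G_p] kills the \<partial>_D-coefficient unless \<lambda> = 0.
  Conversely each admissible combination satisfies the derivation rule on pairs of basis
  elements, which extends bilinearly to the whole algebra.\<close>

lemma ev_self [simp]: "ev u u = 1"
  by (simp add: ev_def)

lemma ev_apply: "ev u t = (if t = u then 1 else 0)"
  by (simp add: ev_def)

lemma support_ev [simp]: "{b. ev u b \<noteq> 0} = {u}"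
  by (auto simp: ev_def)

lemma ev_in_Vsp [simp]: "ev u \<in> Vsp"
  by (simp add: Vsp_def)

lemma zero_in_Vsp [simp]: "(\<lambda>b. 0) \<in> Vsp"
  by (simp add: Vsp_def)

lemma Vsp_add: "x \<in> Vsp \<Longrightarrow> y \<in> Vsp \<Longrightarrow> (\<lambda>b. x b + y b) \<in> Vsp"
  unfolding Vsp_def mem_Collect_eq
  by (rule finite_subset[of _ "{b. x b \<noteq> 0} \<union> {b. y b \<noteq> 0}"]) auto

lemma Vsp_scale: "x \<in> Vsp \<Longrightarrow> (\<lambda>b. a * x b) \<in> Vsp"
  unfolding Vsp_def mem_Collect_eq by (rule finite_subset[of _ "{b. x b \<noteq> 0}"]) auto

lemma Vsp_sum:
  "finite S \<Longrightarrow> (\<And>u. u \<in> S \<Longrightarrow> g u \<in> Vsp) \<Longrightarrow> (\<lambda>t. \<Sum>u\<in>S. g u t) \<in> Vsp"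
proof (induction S rule: finite_induct)
  case (insert x F)
  then have "(\<lambda>t. \<Sum>u\<in>insert x F. g u t) = (\<lambda>t. g x t + (\<lambda>t. \<Sum>u\<in>F. g u t) t)"
    by simp
  then show ?case using insert Vsp_add by simp
qed simp

lemma Vsp_expansion: "x \<in> Vsp \<Longrightarrow> x = (\<lambda>t. \<Sum>u\<in>{b. x b \<noteq> 0}. x u * ev u t)"
proof
  fix t assume "x \<in> Vsp"
  have "(\<Sum>u\<in>{b. x b \<noteq> 0}. x u * ev u t) = (\<Sum>u\<in>{b. x b \<noteq> 0}. if t = u then x u else 0)"
    by (rule sum.cong) (auto simp: ev_def)
  also have "\<dots> = x t" using \<open>x \<in> Vsp\<close> by (simp add: Vsp_def)
  finally show "x t = (\<lambda>t. \<Sum>u\<in>{b. x b \<noteq> 0}. x u * ev u t) t" by simp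
qed

definition vsp_linear :: "((basis \<Rightarrow> complex) \<Rightarrow> basis \<Rightarrow> complex) \<Rightarrow> bool" where
  "vsp_linear L \<longleftrightarrow> (\<forall>x\<in>Vsp. \<forall>y\<in>Vsp. L (\<lambda>b. x b + y b) = (\<lambda>b. L x b + L y b))
    \<and> (\<forall>a. \<forall>x\<in>Vsp. L (\<lambda>b. a * x b) = (\<lambda>b. a * L x b))"

lemma vsp_linear_add:
  "vsp_linear L \<Longrightarrow> x \<in> Vsp \<Longrightarrow> y \<in> Vsp \<Longrightarrow> L (\<lambda>b. x b + y b) = (\<lambda>b. L x b + L y b)"
  unfolding vsp_linear_def by blast

lemma vsp_linear_scale: "vsp_linear L \<Longrightarrow> x \<in> Vsp \<Longrightarrow> L (\<lambda>b. a * x b) = (\<lambda>b. a * L x b)"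
  unfolding vsp_linear_def by blast

lemma vsp_linear_zero: "vsp_linear L \<Longrightarrow> L (\<lambda>b. 0) = (\<lambda>b. 0)"
  using vsp_linear_scale[of L "\<lambda>b. 0" 0] by simp

lemma vsp_linear_sum:
  assumes "vsp_linear L" "finite S" "\<And>u. u \<in> S \<Longrightarrow> g u \<in> Vsp"
  shows "L (\<lambda>t. \<Sum>u\<in>S. f u * g u t) = (\<lambda>t. \<Sum>u\<in>S. f u * L (g u) t)"
  using assms(2,3)
proof (induction S rule: finite_induct)
  case empty
  then show ?case using vsp_linear_zero[OF assms(1)] by simp
next
  case (insert x F)
  have gx: "g x \<in> Vsp" and fgx: "(\<lambda>t. f x * g x t) \<in> Vsp"
    using insert Vsp_scale by auto
  have rest: "(\<lambda>t. \<Sum>u\<in>F. f u * g u t) \<in> Vsp"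
    using insert by (intro Vsp_sum Vsp_scale) auto
  have "L (\<lambda>t. \<Sum>u\<in>insert x F. f u * g u t) = L (\<lambda>t. f x * g x t + (\<Sum>u\<in>F. f u * g u t))"
    using insert by simp
  also have "\<dots> = (\<lambda>t. L (\<lambda>t. f x * g x t) t + L (\<lambda>t. \<Sum>u\<in>F. f u * g u t) t)"
    using vsp_linear_add[OF assms(1) fgx rest] by simp
  also have "\<dots> = (\<lambda>t. \<Sum>u\<in>insert x F. f u * L (g u) t)"
    using insert by (simp add: vsp_linear_scale[OF assms(1) gx])
  finally show ?case .
qed

lemma vsp_linear_expansion:
  assumes "vsp_linear L" "x \<in> Vsp"
  shows "L x = (\<lambda>t. \<Sum>u\<in>{b. x b \<noteq> 0}. x u * L (ev u) t)"
proof -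
  have "L x = L (\<lambda>t. \<Sum>u\<in>{b. x b \<noteq> 0}. x u * ev u t)"
    using Vsp_expansion[OF assms(2)] by (rule arg_cong)
  also have "\<dots> = (\<lambda>t. \<Sum>u\<in>{b. x b \<noteq> 0}. x u * L (ev u) t)"
    by (rule vsp_linear_sum[OF assms(1)]) (use assms(2) in \<open>auto simp: Vsp_def\<close>)
  finally show ?thesis .
qed

lemma vsp_linear_eq_on_basis:
  assumes "vsp_linear L1" "vsp_linear L2" "\<And>u. L1 (ev u) = L2 (ev u)" "x \<in> Vsp"
  shows "L1 x = L2 x"
  using vsp_linear_expansion[OF assms(1,4)] vsp_linear_expansion[OF assms(2,4)] assms(3)
  by simp

fun index :: "basis \<Rightarrow> int" where
  "index (Lb m) = m" | "index (Ib m) = m" | "index (Gb m) = m" | "index (Hb m) = m"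

lemma brb_in_Vsp [simp]: "brb lam u v \<in> Vsp"
proof -
  let ?n = "index u + index v"
  have "{c. brb lam u v c \<noteq> 0} \<subseteq> {Lb ?n, Ib ?n, Ib (?n + 1), Gb ?n, Hb ?n}"
    by (cases u; cases v) (auto simp: ev_def add.commute)
  then show ?thesis unfolding Vsp_def mem_Collect_eq by (rule finite_subset) simp
qed

lemma br_eq_sum_over:
  assumes "finite A" "finite B" "{a. x a \<noteq> 0} \<subseteq> A" "{b. y b \<noteq> 0} \<subseteq> B"
  shows "br lam x y c = (\<Sum>a\<in>A. \<Sum>b\<in>B. x a * y b * brb lam a b c)"
proof -
  have "(\<Sum>b\<in>{b. y b \<noteq> 0}. x a * y b * brb lam a b c) = (\<Sum>b\<in>B. x a * y b * brb lam a b c)"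
    for a by (rule sum.mono_neutral_left) (use assms in auto)
  then have "br lam x y c = (\<Sum>a\<in>{a. x a \<noteq> 0}. \<Sum>b\<in>B. x a * y b * brb lam a b c)"
    unfolding br_def by simp
  also have "\<dots> = (\<Sum>a\<in>A. \<Sum>b\<in>B. x a * y b * brb lam a b c)"
    by (rule sum.mono_neutral_left) (use assms in auto)
  finally show ?thesis .
qed

lemma br_in_Vsp: "x \<in> Vsp \<Longrightarrow> y \<in> Vsp \<Longrightarrow> br lam x y \<in> Vsp"
  unfolding br_def
  by (intro Vsp_sum Vsp_scale) (auto simp: Vsp_def brb_in_Vsp[unfolded Vsp_def, simplified])

lemma br_ev_ev [simp]: "br lam (ev u) (ev v) = brb lam u v"
  by (simp add: br_def)

lemma br_add_left:
  assumes "x1 \<in> Vsp" "x2 \<in> Vsp" "y \<in> Vsp"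
  shows "br lam (\<lambda>b. x1 b + x2 b) y c = br lam x1 y c + br lam x2 y c"
proof -
  let ?A = "{a. x1 a \<noteq> 0} \<union> {a. x2 a \<noteq> 0}" and ?B = "{b. y b \<noteq> 0}"
  have "finite ?A" "finite ?B" using assms by (auto simp: Vsp_def)
  then show ?thesis
    by (subst (1 2 3) br_eq_sum_over[of ?A ?B]) (auto simp: distrib_right sum.distrib)
qed

lemma br_scale_left:
  assumes "x \<in> Vsp" "y \<in> Vsp"
  shows "br lam (\<lambda>b. r * x b) y c = r * br lam x y c"
proof -
  let ?A = "{a. x a \<noteq> 0}" and ?B = "{b. y b \<noteq> 0}"
  have "finite ?A" "finite ?B" using assms by (auto simp: Vsp_def)
  then show ?thesis
    by (subst (1 2) br_eq_sum_over[of ?A ?B]) (auto simp: sum_distrib_left mult.assoc)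
qed

lemma br_add_right:
  assumes "y1 \<in> Vsp" "y2 \<in> Vsp" "x \<in> Vsp"
  shows "br lam x (\<lambda>b. y1 b + y2 b) c = br lam x y1 c + br lam x y2 c"
proof -
  let ?A = "{b. x b \<noteq> 0}" and ?B = "{a. y1 a \<noteq> 0} \<union> {a. y2 a \<noteq> 0}"
  have "finite ?A" "finite ?B" using assms by (auto simp: Vsp_def)
  then show ?thesis
    by (subst (1 2 3) br_eq_sum_over[of ?A ?B]) (auto simp: ring_distribs sum.distrib)
qed

lemma br_scale_right:
  assumes "x \<in> Vsp" "y \<in> Vsp"
  shows "br lam x (\<lambda>b. r * y b) c = r * br lam x y c"
proof -
  let ?A = "{a. x a \<noteq> 0}" and ?B = "{b. y b \<noteq> 0}"
  have "finite ?A" "finite ?B" using assms by (auto simp: Vsp_def)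
  then show ?thesis
    by (subst (1 2) br_eq_sum_over[of ?A ?B]) (auto simp: sum_distrib_left mult_ac)
qed

lemma vsp_linear_br_left: "y \<in> Vsp \<Longrightarrow> vsp_linear (\<lambda>x. br lam x y)"
  unfolding vsp_linear_def by (auto simp: fun_eq_iff br_add_left br_scale_left)

lemma vsp_linear_br_right: "x \<in> Vsp \<Longrightarrow> vsp_linear (br lam x)"
  unfolding vsp_linear_def by (auto simp: fun_eq_iff br_add_right br_scale_right)

lemma br_sum_left:
  assumes "finite S" "\<And>u. u \<in> S \<Longrightarrow> g u \<in> Vsp" "y \<in> Vsp"
  shows "br lam (\<lambda>t. \<Sum>u\<in>S. f u * g u t) y c = (\<Sum>u\<in>S. f u * br lam (g u) y c)"
  using vsp_linear_sum[OF vsp_linear_br_left[of y lam] assms(1,2), where f=f] assms(3)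
  by (simp add: fun_eq_iff)

lemma br_sum_right:
  assumes "finite S" "\<And>u. u \<in> S \<Longrightarrow> g u \<in> Vsp" "x \<in> Vsp"
  shows "br lam x (\<lambda>t. \<Sum>u\<in>S. f u * g u t) c = (\<Sum>u\<in>S. f u * br lam x (g u) c)"
  using vsp_linear_sum[OF vsp_linear_br_right[of x lam] assms(1,2), where f=f] assms(3)
  by (simp add: fun_eq_iff)

lemma br_pair_left:
  assumes "z = (\<lambda>t. p * ev u t + q * ev w t)" "y \<in> Vsp"
  shows "br lam z y c = p * br lam (ev u) y c + q * br lam (ev w) y c"
  unfolding assms(1) using assms(2)
  by (simp add: br_add_left br_scale_left Vsp_scale)

lemma br_pair_right:
  assumes "z = (\<lambda>t. p * ev u t + q * ev w t)" "y \<in> Vsp"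
  shows "br lam y z c = p * br lam y (ev u) c + q * br lam y (ev w) c"
  unfolding assms(1) using assms(2)
  by (simp add: br_add_right br_scale_right Vsp_scale)

fun twin :: "basis \<Rightarrow> basis" where
  "twin (Lb m) = Ib m" | "twin (Ib m) = Lb m" | "twin (Gb k) = Hb k" | "twin (Hb k) = Gb k"

lemma twin_twin [simp]: "twin (twin u) = u"
  by (cases u) auto

lemma twin_neq [simp]: "twin u \<noteq> u"
  by (cases u) auto

lemma evenb_twin [simp]: "evenb (twin u) = evenb u"
  by (cases u) auto

lemma idx_twin [simp]: "idx (twin u) = idx u"
  by (cases u) auto

lemma eq_or_twin_if_same_parity_idx:
  "evenb t = evenb u \<Longrightarrow> idx t = idx u \<Longrightarrow> t = u \<or> t = twin u"
  by (cases t; cases u) auto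

text \<open>The map a ad L_0 + b ad I_0 + c \<partial>_G + d \<partial>_D, written out coordinatewise.\<close>

definition std_der ::
    "complex \<Rightarrow> complex \<Rightarrow> complex \<Rightarrow> complex \<Rightarrow> complex \<Rightarrow> (basis \<Rightarrow> complex) \<Rightarrow> basis \<Rightarrow> complex"
  where
 "std_der lam a b c d x = (\<lambda>t. case t of
     Lb m \<Rightarrow> - a * of_int m * x (Lb m)
   | Ib m \<Rightarrow> - b * of_int m * x (Lb m) + (2 * d - a * of_int m) * x (Ib m)
   | Gb k \<Rightarrow> (d - a * hp k) * x (Gb k)
   | Hb k \<Rightarrow> (a * lam - 2 * b * hp k + c) * x (Gb k) + (3 * d - a * hp k) * x (Hb k))"

definition span_der ::
    "complex \<Rightarrow> complex \<Rightarrow> complex \<Rightarrow> complex \<Rightarrow> complex \<Rightarrow> (basis \<Rightarrow> complex) \<Rightarrow> basis \<Rightarrow> complex"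
  where
  "span_der lam a b c d = (\<lambda>x t. a * ad lam (ev (Lb 0)) x t + b * ad lam (ev (Ib 0)) x t
                                + c * partialG x t + d * partialD x t)"

lemma vsp_linear_std_der: "vsp_linear (std_der lam a b c d)"
  unfolding vsp_linear_def std_der_def
  by (auto simp: fun_eq_iff algebra_simps split: basis.split)

lemma std_der_nonzero_imp: "std_der lam a b c d x t \<noteq> 0 \<Longrightarrow> x t \<noteq> 0 \<or> x (twin t) \<noteq> 0"
  by (cases t) (auto simp: std_der_def)

lemma std_der_in_Vsp:
  assumes "x \<in> Vsp"
  shows "std_der lam a b c d x \<in> Vsp"
proof -
  have "{t. std_der lam a b c d x t \<noteq> 0} \<subseteq> {t. x t \<noteq> 0} \<union> twin ` {t. x t \<noteq> 0}"
    using std_der_nonzero_imp by (force intro: image_eqI[of _ twin, OF twin_twin[symmetric]])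
  moreover have "finite ({t. x t \<noteq> 0} \<union> twin ` {t. x t \<noteq> 0})"
    using assms by (simp add: Vsp_def)
  ultimately show ?thesis unfolding Vsp_def mem_Collect_eq by (rule finite_subset)
qed

lemma std_der_ev:
  "std_der lam a b c d (ev u) =
     (\<lambda>t. std_der lam a b c d (ev u) u * ev u t + std_der lam a b c d (ev u) (twin u) * ev (twin u) t)"
  by (cases u) (auto simp: fun_eq_iff std_der_def ev_def split: basis.split)

lemma vsp_linear_partialG: "vsp_linear partialG"
  unfolding vsp_linear_def partialG_def by (auto simp: fun_eq_iff split: basis.split)

lemma vsp_linear_partialD: "vsp_linear partialD"
  unfolding vsp_linear_def partialD_def by (auto simp: fun_eq_iff algebra_simps split: basis.split)

lemma vsp_linear_span_der: "vsp_linear (span_der lam a b c d)"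
proof -
  have ad: "vsp_linear (ad lam (ev (Lb 0)))" "vsp_linear (ad lam (ev (Ib 0)))"
    by (simp_all add: ad_def vsp_linear_br_right)
  show ?thesis
    unfolding vsp_linear_def span_der_def
    using vsp_linear_add[OF ad(1)] vsp_linear_add[OF ad(2)]
      vsp_linear_add[OF vsp_linear_partialG] vsp_linear_add[OF vsp_linear_partialD]
      vsp_linear_scale[OF ad(1)] vsp_linear_scale[OF ad(2)]
      vsp_linear_scale[OF vsp_linear_partialG] vsp_linear_scale[OF vsp_linear_partialD]
    by (auto simp: fun_eq_iff algebra_simps)
qed

lemma span_der_eq_std_der: "x \<in> Vsp \<Longrightarrow> span_der lam a b c d x = std_der lam a b c d x"
proof (rule vsp_linear_eq_on_basis[OF vsp_linear_span_der vsp_linear_std_der])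
  show "span_der lam a b c d (ev u) = std_der lam a b c d (ev u)" for u
    unfolding span_der_def ad_def br_ev_ev
    by (cases u) (auto simp: std_der_def partialG_def partialD_def ev_def hp_def fun_eq_iff
        algebra_simps split: basis.split)
qed

lemma std_der_coeffs_unique:
  assumes "\<forall>x\<in>Vsp. std_der lam a b c d x = std_der lam a' b' c' d' x"
  shows "(a, b, c, d) = (a', b', c', d')"
proof -
  have L1: "std_der lam a b c d (ev (Lb 1)) = std_der lam a' b' c' d' (ev (Lb 1))"
   and G0: "std_der lam a b c d (ev (Gb 0)) = std_der lam a' b' c' d' (ev (Gb 0))"
    using assms by simp_all
  have "a = a'" using fun_cong[OF L1, of "Lb 1"] by (simp add: std_der_def ev_apply)
  moreover have "b = b'" using fun_cong[OF L1, of "Ib 1"] by (simp add: std_der_def ev_apply)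
  moreover have "d = d'" using fun_cong[OF G0, of "Gb 0"] \<open>a = a'\<close>
    by (simp add: std_der_def ev_apply)
  moreover have "c = c'" using fun_cong[OF G0, of "Hb 0"] \<open>a = a'\<close> \<open>b = b'\<close>
    by (simp add: std_der_def ev_apply)
  ultimately show ?thesis by simp
qed

subsection \<open>Derivations are determined on pairs of basis elements\<close>

lemma br_sum_sum:
  assumes "finite S" "finite T" "\<And>a. a \<in> S \<Longrightarrow> f a \<in> Vsp" "\<And>b. b \<in> T \<Longrightarrow> g b \<in> Vsp"
  shows "br lam (\<lambda>t. \<Sum>a\<in>S. p a * f a t) (\<lambda>t. \<Sum>b\<in>T. q b * g b t) c
           = (\<Sum>a\<in>S. \<Sum>b\<in>T. p a * q b * br lam (f a) (g b) c)"
proof -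
  have gsum: "(\<lambda>t. \<Sum>b\<in>T. q b * g b t) \<in> Vsp"
    using assms(2,4) by (intro Vsp_sum Vsp_scale) auto
  have "br lam (\<lambda>t. \<Sum>a\<in>S. p a * f a t) (\<lambda>t. \<Sum>b\<in>T. q b * g b t) c
          = (\<Sum>a\<in>S. p a * br lam (f a) (\<lambda>t. \<Sum>b\<in>T. q b * g b t) c)"
    by (rule br_sum_left) (use assms(1,3) gsum in auto)
  also have "\<dots> = (\<Sum>a\<in>S. p a * (\<Sum>b\<in>T. q b * br lam (f a) (g b) c))"
    by (intro sum.cong refl arg_cong2[where f = times] br_sum_right) (use assms in auto)
  finally show ?thesis by (simp add: sum_distrib_left mult_ac)
qed

lemma vsp_linear_double_sum:
  assumes "vsp_linear L" "finite S" "finite T" "\<And>a b. h a b \<in> Vsp"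
  shows "L (\<lambda>t. \<Sum>a\<in>S. p a * (\<Sum>b\<in>T. q b * h a b t))
           = (\<lambda>t. \<Sum>a\<in>S. p a * (\<Sum>b\<in>T. q b * L (h a b) t))"
proof -
  have inner: "(\<lambda>t. \<Sum>b\<in>T. q b * h a b t) \<in> Vsp" for a
    using assms(3,4) by (intro Vsp_sum Vsp_scale) auto
  have "L (\<lambda>t. \<Sum>a\<in>S. p a * (\<lambda>t. \<Sum>b\<in>T. q b * h a b t) t)
          = (\<lambda>t. \<Sum>a\<in>S. p a * L (\<lambda>t. \<Sum>b\<in>T. q b * h a b t) t)"
    by (rule vsp_linear_sum[OF assms(1,2) inner])
  then show ?thesis
    by (simp add: vsp_linear_sum[OF assms(1,3) assms(4)])
qed

lemma derivation_from_basis: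
  assumes L: "vsp_linear L" and L_Vsp: "\<And>x. x \<in> Vsp \<Longrightarrow> L x \<in> Vsp"
    and basis: "\<And>u v. L (brb lam u v) = (\<lambda>c. br lam (L (ev u)) (ev v) c + br lam (ev u) (L (ev v)) c)"
    and x: "x \<in> Vsp" and y: "y \<in> Vsp"
  shows "L (br lam x y) = (\<lambda>c. br lam (L x) y c + br lam x (L y) c)"
proof
  fix c
  define Sx where "Sx = {a. x a \<noteq> 0}"
  define Sy where "Sy = {b. y b \<noteq> 0}"
  have fin: "finite Sx" "finite Sy" using x y by (auto simp: Vsp_def Sx_def Sy_def)
  have ex: "x = (\<lambda>t. \<Sum>a\<in>Sx. x a * ev a t)" and ey: "y = (\<lambda>t. \<Sum>b\<in>Sy. y b * ev b t)"
    using Vsp_expansion[OF x] Vsp_expansion[OF y] by (simp_all add: Sx_def Sy_def)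
  have Lx: "L x = (\<lambda>t. \<Sum>a\<in>Sx. x a * L (ev a) t)" and Ly: "L y = (\<lambda>t. \<Sum>b\<in>Sy. y b * L (ev b) t)"
    using vsp_linear_expansion[OF L x] vsp_linear_expansion[OF L y] by (simp_all add: Sx_def Sy_def)
  have "br lam x y = (\<lambda>t. \<Sum>a\<in>Sx. x a * (\<Sum>b\<in>Sy. y b * brb lam a b t))"
    by (simp add: br_def Sx_def Sy_def sum_distrib_left mult.assoc)
  then have "L (br lam x y) c
      = (\<Sum>a\<in>Sx. x a * (\<Sum>b\<in>Sy. y b * (br lam (L (ev a)) (ev b) c + br lam (ev a) (L (ev b)) c)))"
    by (simp add: vsp_linear_double_sum[OF L fin] basis)
  also have "\<dots> = (\<Sum>a\<in>Sx. \<Sum>b\<in>Sy. x a * y b * br lam (L (ev a)) (ev b) c)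
                  + (\<Sum>a\<in>Sx. \<Sum>b\<in>Sy. x a * y b * br lam (ev a) (L (ev b)) c)"
    by (simp add: sum_distrib_left sum.distrib distrib_left mult_ac)
  also have "\<dots> = br lam (L x) y c + br lam x (L y) c"
    using br_sum_sum[OF fin, of "\<lambda>a. L (ev a)" ev lam x y c, folded Lx ey]
      br_sum_sum[OF fin, of ev "\<lambda>b. L (ev b)" lam x y c, folded ex Ly]
    by (simp add: L_Vsp)
  finally show "L (br lam x y) c = (\<lambda>c. br lam (L x) y c + br lam x (L y) c) c" by simp
qed

lemma std_der_brb:
  assumes "lam = 0 \<or> d = 0"
  shows "std_der lam a b c d (brb lam u v) t
           = std_der lam a b c d (ev u) u * brb lam u v t
             + std_der lam a b c d (ev u) (twin u) * brb lam (twin u) v t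
             + std_der lam a b c d (ev v) v * brb lam u v t
             + std_der lam a b c d (ev v) (twin v) * brb lam u (twin v) t"
  using assms by (cases u; cases v; cases t) (auto simp: std_der_def ev_def hp_def field_simps)

lemma std_der_derivation:
  assumes "lam = 0 \<or> d = 0" "x \<in> Vsp" "y \<in> Vsp"
  shows "std_der lam a b c d (br lam x y)
           = (\<lambda>t. br lam (std_der lam a b c d x) y t + br lam x (std_der lam a b c d y) t)"
  by (rule derivation_from_basis[OF vsp_linear_std_der std_der_in_Vsp _ assms(2,3)])
    (auto simp: fun_eq_iff std_der_brb[OF assms(1)]
      br_pair_left[OF std_der_ev] br_pair_right[OF std_der_ev])

lemma even_superder_std_der:
  assumes "lam = 0 \<or> d = 0" and D: "\<forall>x\<in>Vsp. D x = std_der lam a b c d x"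
  shows "even_superder_deg0 lam D"
  unfolding even_superder_deg0_def
proof (intro conjI)
  show "\<forall>x\<in>Vsp. D x \<in> Vsp"
    using D std_der_in_Vsp by simp
  show "\<forall>x\<in>Vsp. \<forall>y\<in>Vsp. D (\<lambda>b. x b + y b) = (\<lambda>b. D x b + D y b)"
    using D Vsp_add vsp_linear_add[OF vsp_linear_std_der] by simp
  show "\<forall>a. \<forall>x\<in>Vsp. D (\<lambda>b. a * x b) = (\<lambda>b. a * D x b)"
    using D Vsp_scale vsp_linear_scale[OF vsp_linear_std_der] by simp
  show "\<forall>x\<in>Vsp. (\<forall>b. x b \<noteq> 0 \<longrightarrow> evenb b) \<longrightarrow> (\<forall>b. D x b \<noteq> 0 \<longrightarrow> evenb b)"
    using D std_der_nonzero_imp by (metis evenb_twin)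
  show "\<forall>x\<in>Vsp. (\<forall>b. x b \<noteq> 0 \<longrightarrow> \<not> evenb b) \<longrightarrow> (\<forall>b. D x b \<noteq> 0 \<longrightarrow> \<not> evenb b)"
    using D std_der_nonzero_imp by (metis evenb_twin)
  show "\<forall>q. \<forall>x\<in>Vsp. (\<forall>b. x b \<noteq> 0 \<longrightarrow> idx b = q) \<longrightarrow> (\<forall>b. D x b \<noteq> 0 \<longrightarrow> idx b = q)"
    using D std_der_nonzero_imp by (metis idx_twin)
  show "\<forall>x\<in>Vsp. \<forall>y\<in>Vsp. D (br lam x y) = (\<lambda>c. br lam (D x) y c + br lam x (D y) c)"
    using D br_in_Vsp std_der_derivation[OF assms(1)] by simp
qed

lemma int_additive_imp_linear:
  fixes f :: "int \<Rightarrow> complex"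
  assumes add: "\<And>m n. m \<noteq> n \<Longrightarrow> f (m + n) = f m + f n"
  shows "f m = of_int m * f 1"
proof -
  have f0: "f 0 = 0" using add[of 0 1] by simp
  have neg: "f (- n) = - f n" for n
    using add[of n "- n"] f0 by (cases "n = 0") (auto simp: eq_neg_iff_add_eq_0 add.commute)
  have f2: "f 2 = 2 * f 1" using add[of 2 "- 1"] neg[of 1] by simp
  have nat: "f (int n) = of_nat n * f 1" for n
  proof (induction n)
    case (Suc n)
    show ?case
    proof (cases "n = 1")
      case True then show ?thesis using f2 by simp
    next
      case False
      then have "f (int n + 1) = f (int n) + f 1" using add[of "int n" 1] by simp
      then show ?thesis using Suc by (simp add: algebra_simps)
    qed
  qed (simp add: f0)
  show ?thesis
  proof (cases "m \<ge> 0")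
    case True
    then show ?thesis using nat[of "nat m"] by simp
  next
    case False
    then show ?thesis using nat[of "nat (- m)"] neg[of "- m"] by simp
  qed
qed

lemma int_pairwise_sum_zero_imp_zero:
  fixes f :: "int \<Rightarrow> complex"
  assumes "\<And>m n. m \<noteq> n \<Longrightarrow> f m + f n = 0"
  shows "f m = 0"
proof -
  have "f m + f (m + 1) = 0" "f m + f (m + 2) = 0" "f (m + 1) + f (m + 2) = 0"
    using assms by auto
  then show ?thesis by (simp add: eq_neg_iff_add_eq_0[symmetric] add.commute)
qed

lemma hp_nonzero: "hp k \<noteq> 0"
proof
  assume "hp k = 0"
  then have "(of_int (2 * k + 1) :: complex) = 0" by (simp add: hp_def field_simps)
  then have "2 * k + 1 = 0" by (simp only: of_int_eq_0_iff)
  then show False by presburger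
qed

subsection \<open>Coefficients of an arbitrary degree-0 even superderivation\<close>

locale even_superder =
  fixes lam :: complex and D :: "(basis \<Rightarrow> complex) \<Rightarrow> basis \<Rightarrow> complex"
  assumes superder: "even_superder_deg0 lam D"
begin

lemma D_linear: "vsp_linear D"
  using superder unfolding even_superder_deg0_def vsp_linear_def by blast

lemma D_derivation:
  "x \<in> Vsp \<Longrightarrow> y \<in> Vsp \<Longrightarrow> D (br lam x y) = (\<lambda>c. br lam (D x) y c + br lam x (D y) c)"
  using superder unfolding even_superder_deg0_def by blast

lemma D_ev_nonzero_imp:
  assumes "D (ev u) t \<noteq> 0"
  shows "t = u \<or> t = twin u"
proof (rule eq_or_twin_if_same_parity_idx)
  have "\<forall>b. ev u b \<noteq> 0 \<longrightarrow> idx b = idx u" by (simp add: ev_apply)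
  then show "idx t = idx u"
    using superder assms unfolding even_superder_deg0_def by (meson ev_in_Vsp)
  have "(\<forall>b. ev u b \<noteq> 0 \<longrightarrow> evenb b) \<or> (\<forall>b. ev u b \<noteq> 0 \<longrightarrow> \<not> evenb b)"
    by (simp add: ev_apply)
  then show "evenb t = evenb u"
    using superder assms unfolding even_superder_deg0_def by (metis ev_in_Vsp ev_self one_neq_zero)
qed

lemma D_ev: "D (ev u) = (\<lambda>t. D (ev u) u * ev u t + D (ev u) (twin u) * ev (twin u) t)"
proof
  fix t
  show "D (ev u) t = D (ev u) u * ev u t + D (ev u) (twin u) * ev (twin u) t"
    using D_ev_nonzero_imp[of u t] by (cases "t = u \<or> t = twin u") (auto simp: ev_apply)
qed

lemma D_brb:
  "D (brb lam u v) t = D (ev u) u * brb lam u v t + D (ev u) (twin u) * brb lam (twin u) v t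
     + D (ev v) v * brb lam u v t + D (ev v) (twin v) * brb lam u (twin v) t"
  using D_derivation[of "ev u" "ev v"] br_pair_left[OF D_ev, of "ev v" lam]
    br_pair_right[OF D_ev, of "ev u" lam]
  by (simp add: fun_eq_iff)

lemma D_scale_ev: "D (\<lambda>c. s * ev w c) = (\<lambda>c. s * D (ev w) c)"
  using vsp_linear_scale[OF D_linear, of "ev w" s] by simp

lemma D_pair_ev: "D (\<lambda>c. s * ev w c + s' * ev w' c) = (\<lambda>c. s * D (ev w) c + s' * D (ev w') c)"
  using vsp_linear_add[OF D_linear, of "\<lambda>c. s * ev w c" "\<lambda>c. s' * ev w' c"] D_scale_ev
    Vsp_scale[OF ev_in_Vsp]
  by simp

text \<open>D maps X_m into the span of X_m and its twin, so D is determined by these eight families: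
  cXY m is the coefficient of Y_m in D X_m (with G_k, H_k standing for G_{k+1/2}, H_{k+1/2}).\<close>

definition "cLL m = D (ev (Lb m)) (Lb m)"
definition "cLI m = D (ev (Lb m)) (Ib m)"
definition "cIL m = D (ev (Ib m)) (Lb m)"
definition "cII m = D (ev (Ib m)) (Ib m)"
definition "cGG k = D (ev (Gb k)) (Gb k)"
definition "cGH k = D (ev (Gb k)) (Hb k)"
definition "cHG k = D (ev (Hb k)) (Gb k)"
definition "cHH k = D (ev (Hb k)) (Hb k)"

lemma cLL_add:
  assumes "m \<noteq> n"
  shows "cLL (m + n) = cLL m + cLL n"
proof -
  have "of_int (m - n) * cLL (m + n) = of_int (m - n) * (cLL m + cLL n)"
    using D_brb[of "Lb m" "Lb n" "Lb (m + n)"] unfolding brb.simps D_scale_ev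
    by (simp add: ev_apply cLL_def algebra_simps)
  then show ?thesis using assms by simp
qed

lemma cLI_add:
  assumes "m \<noteq> n"
  shows "cLI (m + n) = cLI m + cLI n"
proof -
  have "of_int (m - n) * cLI (m + n) = of_int (m - n) * (cLI m + cLI n)"
    using D_brb[of "Lb m" "Lb n" "Ib (m + n)"] unfolding brb.simps D_scale_ev
    by (simp add: ev_apply cLI_def algebra_simps)
  then show ?thesis using assms by simp
qed

lemma cII_add:
  assumes "m \<noteq> n"
  shows "cII (m + n) = cLL m + cII n"
proof -
  have "of_int (m - n) * cII (m + n) = of_int (m - n) * (cLL m + cII n)"
    using D_brb[of "Lb m" "Ib n" "Ib (m + n)"] unfolding brb.simps D_scale_ev
    by (simp add: ev_apply cLL_def cII_def algebra_simps)
  then show ?thesis using assms by simp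
qed

lemma cIL_pair:
  assumes "m \<noteq> n"
  shows "cIL m + cIL n = 0"
proof -
  have "of_int (m - n) * (cIL m + cIL n) = of_int (m - n) * 0"
    using D_brb[of "Ib m" "Ib n" "Ib (m + n)"] vsp_linear_zero[OF D_linear] unfolding brb.simps
    by (simp add: ev_apply cIL_def algebra_simps)
  then show ?thesis using assms by simp
qed

lemma cII_GG: "cII (k + l + 1) = cGG k + cGG l"
  using D_brb[of "Gb k" "Gb l" "Ib (k + l + 1)"] unfolding brb.simps
  by (simp add: ev_apply cII_def cGG_def)

lemma cHG_eq: "(of_int m - 2 * hp k) * cHG (m + k) = cIL m * (of_int m / 2 - hp k)"
  using D_brb[of "Ib m" "Gb k" "Gb (m + k)"] unfolding brb.simps D_scale_ev
  by (simp add: ev_apply cIL_def cHG_def algebra_simps)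

lemma cHH_eq:
  "(of_int m - 2 * hp k) * cHH (m + k)
     = (of_int m - 2 * hp k) * (cII m + cGG k) + cIL m * (lam * (of_int m + 1))"
  using D_brb[of "Ib m" "Gb k" "Hb (m + k)"] unfolding brb.simps D_scale_ev
  by (simp add: ev_apply cIL_def cHH_def cII_def cGG_def algebra_simps)

lemma cGH_eq:
  "(of_int m / 2 - hp k) * cGH (m + k) + lam * (of_int m + 1) * cHH (m + k)
     = lam * (of_int m + 1) * (cLL m + cGG k) + cLI m * (of_int m - 2 * hp k)
       + cGH k * (of_int m / 2 - hp k)"
  using D_brb[of "Lb m" "Gb k" "Hb (m + k)"] unfolding brb.simps D_pair_ev
  by (simp add: ev_apply cLL_def cLI_def cGG_def cGH_def cHH_def algebra_simps)

lemma cLL_linear: "cLL m = of_int m * cLL 1"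
  by (rule int_additive_imp_linear) (rule cLL_add)

lemma cLI_linear: "cLI m = of_int m * cLI 1"
  by (rule int_additive_imp_linear) (rule cLI_add)

lemma cIL_zero: "cIL m = 0"
  by (rule int_pairwise_sum_zero_imp_zero) (rule cIL_pair)

lemma cII_formula: "cII m = cII 0 + cLL m"
  using cII_add[of m 0] cLL_linear[of 0] by (cases "m = 0") simp_all

lemma cGG_formula: "2 * cGG k = cII 0 + (2 * of_int k + 1) * cLL 1"
  using cII_GG[of k k] cII_formula[of "k + k + 1"] cLL_linear[of "k + k + 1"]
  by (simp add: algebra_simps)

lemma cHG_zero: "cHG k = 0"
  using cHG_eq[of 0 k] cIL_zero[of 0] hp_nonzero[of k] by simp

lemma cHH_formula: "cHH k = cII 0 + cGG k"
  using cHH_eq[of 0 k] cIL_zero[of 0] hp_nonzero[of k] by simp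

text \<open>In the H_0-component of the rule for [L_0, G_0] only the term \<lambda>H_0 of the bracket
  survives; it excludes \<partial>_D (coefficient cII 0 / 2) when \<lambda> \<noteq> 0.\<close>

lemma lam_cII0: "lam * cII 0 = 0"
  using cGH_eq[of 0 0] cLL_linear[of 0] cLI_linear[of 0] cHH_formula[of 0]
  by (simp add: algebra_simps)

lemma cGG_shift: "cGG (m + k) = cGG k + cLL m"
proof -
  have "2 * cGG (m + k) = 2 * (cGG k + cLL m)"
    using cGG_formula[of "m + k"] cGG_formula[of k] cLL_linear[of m] by (simp add: algebra_simps)
  then show ?thesis by (metis mult_cancel_left zero_neq_numeral)
qed

text \<open>The exception m = 2k + 1 is where [L_m, G_k] has no G-component.\<close>

lemma cGH_step:
  assumes "m \<noteq> 2 * k + 1"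
  shows "cGH (m + k) = cGH k + 2 * of_int m * cLI 1"
proof -
  have "of_int m / 2 - hp k \<noteq> 0"
  proof
    assume "of_int m / 2 - hp k = 0"
    then have "(of_int (m - 2 * k - 1) :: complex) = 0" by (simp add: hp_def field_simps)
    then have "m - 2 * k - 1 = 0" by (simp only: of_int_eq_0_iff)
    then show False using assms by simp
  qed
  moreover have "(of_int m / 2 - hp k) * (cGH (m + k) - cGH k - 2 * of_int m * cLI 1) = 0"
    using cGH_eq[of m k] cLI_linear[of m] cHH_formula[of "m + k"] cGG_shift[of m k] lam_cII0
    by (cases "lam = 0") (simp_all add: algebra_simps)
  ultimately have "cGH (m + k) - cGH k - 2 * of_int m * cLI 1 = 0" by simp
  then show ?thesis by (simp add: algebra_simps)
qed

lemma cGH_formula: "cGH j = cGH 0 + 2 * of_int j * cLI 1"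
proof (cases "j = 1")
  case True
  then show ?thesis
    using cGH_step[of "- 1" 2] cGH_step[of 2 0] by simp
next
  case False
  then show ?thesis using cGH_step[of j 0] by simp
qed

definition "coeff_L0 = - cLL 1"
definition "coeff_I0 = - cLI 1"
definition "coeff_G = cGH 0 - cLI 1 + lam * cLL 1"
definition "coeff_D = cII 0 / 2"

lemma D_ev_eq_std_der: "D (ev u) = std_der lam coeff_L0 coeff_I0 coeff_G coeff_D (ev u)"
proof
  fix t
  show "D (ev u) t = std_der lam coeff_L0 coeff_I0 coeff_G coeff_D (ev u) t"
  proof (cases u)
    case (Lb m)
    then show ?thesis using cLL_linear[of m] cLI_linear[of m]
      by (subst D_ev) (cases t; auto simp: ev_apply std_der_def cLL_def cLI_def coeff_L0_def coeff_I0_def)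
  next
    case (Ib m)
    then show ?thesis using cLL_linear[of m] cII_formula[of m] cIL_zero[of m]
      by (subst D_ev) (cases t; auto simp: ev_apply std_der_def cLL_def cII_def cIL_def coeff_L0_def coeff_D_def)
  next
    case (Gb k)
    then show ?thesis using cGG_formula[of k] cGH_formula[of k]
      by (subst D_ev) (cases t; auto simp: ev_apply std_der_def cGG_def cGH_def coeff_L0_def
          coeff_I0_def coeff_G_def coeff_D_def hp_def field_simps)
  next
    case (Hb k)
    then show ?thesis using cGG_formula[of k] cHH_formula[of k] cHG_zero[of k]
      by (subst D_ev) (cases t; auto simp: ev_apply std_der_def cHG_def cHH_def coeff_L0_def
          coeff_D_def hp_def field_simps)
  qed
qed

lemma std_der_coords:
  "(lam \<noteq> 0 \<longrightarrow> coeff_D = 0) \<and> (\<forall>x\<in>Vsp. D x = std_der lam coeff_L0 coeff_I0 coeff_G coeff_D x)"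
  using lam_cII0 vsp_linear_eq_on_basis[OF D_linear vsp_linear_std_der D_ev_eq_std_der]
  by (auto simp: coeff_D_def)

end

lemma even_superder_iff_unique_std_der:
  "even_superder_deg0 lam D \<longleftrightarrow>
     (\<exists>!(a, b, c, d). (lam \<noteq> 0 \<longrightarrow> d = 0) \<and> (\<forall>x\<in>Vsp. D x = std_der lam a b c d x))"
proof
  assume "even_superder_deg0 lam D"
  then interpret even_superder lam D by unfold_locales
  show "\<exists>!(a, b, c, d). (lam \<noteq> 0 \<longrightarrow> d = 0) \<and> (\<forall>x\<in>Vsp. D x = std_der lam a b c d x)"
  proof (rule ex1I[of _ "(coeff_L0, coeff_I0, coeff_G, coeff_D)"])
    show "case (coeff_L0, coeff_I0, coeff_G, coeff_D) of (a, b, c, d) \<Rightarrow>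
        (lam \<noteq> 0 \<longrightarrow> d = 0) \<and> (\<forall>x\<in>Vsp. D x = std_der lam a b c d x)"
      using std_der_coords by simp
    fix z
    assume "case z of (a, b, c, d) \<Rightarrow>
        (lam \<noteq> 0 \<longrightarrow> d = 0) \<and> (\<forall>x\<in>Vsp. D x = std_der lam a b c d x)"
    then show "z = (coeff_L0, coeff_I0, coeff_G, coeff_D)"
      using std_der_coords std_der_coeffs_unique by (cases z) force
  qed
next
  assume "\<exists>!(a, b, c, d). (lam \<noteq> 0 \<longrightarrow> d = 0) \<and> (\<forall>x\<in>Vsp. D x = std_der lam a b c d x)"
  then obtain a b c d where "lam = 0 \<or> d = 0" "\<forall>x\<in>Vsp. D x = std_der lam a b c d x"
    by auto
  then show "even_superder_deg0 lam D" by (rule even_superder_std_der)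
qed

theorem lemma2p7:
  fixes lam :: complex
    and D :: "(basis \<Rightarrow> complex) \<Rightarrow> basis \<Rightarrow> complex"
  shows "even_superder_deg0 lam D \<longleftrightarrow>
    (\<exists>!(a, b, c, d). (lam \<noteq> 0 \<longrightarrow> d = 0) \<and>
       (\<forall>x\<in>Vsp. D x = (\<lambda>t. a * ad lam (ev (Lb 0)) x t + b * ad lam (ev (Ib 0)) x t
                            + c * partialG x t + d * partialD x t)))"
proof -
  have "(\<forall>x\<in>Vsp. D x = (\<lambda>t. a * ad lam (ev (Lb 0)) x t + b * ad lam (ev (Ib 0)) x t
                            + c * partialG x t + d * partialD x t))
        \<longleftrightarrow> (\<forall>x\<in>Vsp. D x = std_der lam a b c d x)" for a b c d
    using span_der_eq_std_der unfolding span_der_def by auto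
  then show ?thesis by (simp only: even_superder_iff_unique_std_der)
qed

end
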